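(* A commutative Bezout domain $R$ is a commutative elementary divisor domain if and only if for all $a_1,a_2,b_1,b_2\in R$ with $(a_1,a_2)=(b_1,b_2)=1$ there exists $r\in R$ such that $b_1+rb_2=\alpha\beta$ for some $\alpha,\beta\in R$ with $(\alpha,\beta)=(a_1,\alpha)=(a_2,\beta)=1$.
   Context: A commutative Bezout domain is a commutative integral domain with $1\ne0$ in which every finitely generated ideal is principal; $(\cdot,\cdot)$ denotes a greatest common divisor. $R$ is an elementary divisor ring if every matrix $A$ over $R$ admits invertible $P,Q$ with $PAQ$ a diagonal matrix $\mathrm{diag}(d_1,\dots,d_r,0,\dots,0)$ with $d_i\mid d_{i+1}$. *)

theory Defs
  imports Main "Jordan_Normal_Form.Matrix"
begin

definition fin_gen_ideal :: "'a::comm_ring_1 set \<Rightarrow> 'a set" where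
  "fin_gen_ideal S = {\<Sum>s\<in>S. c s * s | c. True}"

text \<open>Commutative Bezout domain: integral domain (1 \<noteq> 0 built into idom) in which every
  finitely generated ideal is principal.\<close>
definition bezout_domain :: "'a::idom itself \<Rightarrow> bool" where
  "bezout_domain _ \<longleftrightarrow>
     (\<forall>S::'a set. finite S \<longrightarrow> (\<exists>d. fin_gen_ideal S = {d * x | x. True}))"

definition gcd_one :: "'a::comm_ring_1 \<Rightarrow> 'a \<Rightarrow> bool" where
  "gcd_one a b \<longleftrightarrow> (\<forall>c. c dvd a \<longrightarrow> c dvd b \<longrightarrow> c dvd 1)"

text \<open>Diagonal m x n matrix diag(d_1,...,d_r,0,...,0) with d_i | d_(i+1) (the zero tail is
  forced by divisibility of consecutive diagonal entries, since 0 dvd x implies x = 0).\<close>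
definition smith_diag :: "'a::comm_ring_1 mat \<Rightarrow> bool" where
  "smith_diag D \<longleftrightarrow>
     (\<forall>i<dim_row D. \<forall>j<dim_col D. i \<noteq> j \<longrightarrow> D $$ (i, j) = 0) \<and>
     (\<forall>i. Suc i < min (dim_row D) (dim_col D) \<longrightarrow> D $$ (i, i) dvd D $$ (Suc i, Suc i))"

definition elementary_divisor_ring :: "'a::comm_ring_1 itself \<Rightarrow> bool" where
  "elementary_divisor_ring _ \<longleftrightarrow>
     (\<forall>m n (A::'a mat). A \<in> carrier_mat m n \<longrightarrow>
        (\<exists>P Q. P \<in> carrier_mat m m \<and> Q \<in> carrier_mat n n \<and>
               invertible_mat P \<and> invertible_mat Q \<and> smith_diag (P * A * Q)))"

end

theory Submission
  imports Defs
begin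

text \<open>
  Under the Bezout hypothesis the stated condition is equivalent to Kaplansky's criterion: whenever
  \<open>(a, b, c) = 1\<close> there are \<open>p, q\<close> with \<open>(p a, p b + q c) = 1\<close>. One direction factors
  \<open>b + r c\<close> suitably after dividing out \<open>(b, c)\<close>; the other applies the criterion to
  \<open>a\<^sub>1, a\<^sub>2 b\<^sub>1, a\<^sub>2 b\<^sub>2\<close>.

  Kaplansky's criterion makes every matrix \<open>A\<close> admit vectors \<open>x, y\<close> such that \<open>x\<^sup>T A y\<close> divides
  all entries of \<open>A\<close>: for \<open>2 \<times> 2\<close> matrices after a column operation bringing \<open>A\<close> to the shape
  \<open>[[g, 0], [b, c]]\<close>, and in general by induction on the rows. Invertible transformations
  mapping \<open>y\<close>, and then the first column of the transformed matrix, to multiples of the first unit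
  vector bring a divisor of \<open>x\<^sup>T A y\<close> dividing all entries to position \<open>(0, 0)\<close>; clearing its row
  and recursing yields the Smith form.
  Conversely, diagonalising \<open>[[a, 0], [b, c]]\<close> exhibits \<open>d\<^sub>1\<close>, a unit as it divides \<open>a, b, c\<close>, as
  \<open>P\<^sub>0\<^sub>0 (a Q\<^sub>0\<^sub>0) + P\<^sub>0\<^sub>1 (b Q\<^sub>0\<^sub>0 + c Q\<^sub>1\<^sub>0)\<close>, which gives Kaplansky's criterion
  with \<open>p = Q\<^sub>0\<^sub>0\<close> and \<open>q = Q\<^sub>1\<^sub>0\<close>.
\<close>

section \<open>Arithmetic in Bezout domains\<close>

lemma fin_gen_ideal_sum_mem: "finite S \<Longrightarrow> (\<Sum>s\<in>S. c s * s) \<in> fin_gen_ideal S"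
  unfolding fin_gen_ideal_def by blast

lemma bezout_domain_gcd:
  fixes a b :: "'a::idom"
  assumes "bezout_domain TYPE('a)"
  obtains d s t where "d = s * a + t * b" "d dvd a" "d dvd b"
proof -
  have "finite {a, b}" by simp
  then obtain d where d: "fin_gen_ideal {a, b} = {d * x | x. True}"
    using assms unfolding bezout_domain_def by blast
  have dvd_gen: "d dvd x" if "x \<in> {a, b}" for x
  proof -
    have "(\<Sum>s\<in>{a, b}. (if s = x then 1 else 0) * s) \<in> fin_gen_ideal {a, b}"
      by (rule fin_gen_ideal_sum_mem) simp
    moreover have "(\<Sum>s\<in>{a, b}. (if s = x then 1 else 0) * s) = x"
      using that by (cases "a = b") auto
    ultimately show ?thesis using d by auto
  qed
  have "d \<in> fin_gen_ideal {a, b}"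
    using d by (metis (mono_tags, lifting) mem_Collect_eq mult_1_right)
  then obtain c where c: "d = (\<Sum>s\<in>{a, b}. c s * s)"
    unfolding fin_gen_ideal_def by blast
  have "d = c a * a + (if a = b then 0 else c b) * b"
    unfolding c by (cases "a = b") simp_all
  then show thesis
    using dvd_gen by (intro that[of d "c a" "if a = b then 0 else c b"]) simp_all
qed

lemma bezout_domain_gcd_cofactors:
  fixes a b :: "'a::idom"
  assumes "bezout_domain TYPE('a)"
  obtains d s t u w where "a = d * u" "b = d * w" "s * u + t * w = 1"
proof -
  obtain d s t where d: "d = s * a + t * b" "d dvd a" "d dvd b"
    using bezout_domain_gcd[OF assms] .
  obtain u w where uw: "a = d * u" "b = d * w"
    using d(2,3) by (auto elim!: dvdE)
  show thesis
  proof (cases "d = 0")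
    case True
    then show thesis using uw by (intro that[of 0 1 0 1 0]) auto
  next
    case False
    have "d * (s * u + t * w) = d * 1"
      using d(1) uw by (simp add: algebra_simps)
    then show thesis using False uw by (intro that[of d u w s t]) simp_all
  qed
qed

lemma bezout_domain_gcd_cofactors3:
  fixes a b c :: "'a::idom"
  assumes "bezout_domain TYPE('a)"
  obtains h a' b' c' l0 l1 l2
  where "a = h * a'" "b = h * b'" "c = h * c'" "l0 * a' + l1 * b' + l2 * c' = 1"
proof -
  obtain g s t u w where g: "a = g * u" "b = g * w" "s * u + t * w = 1"
    using bezout_domain_gcd_cofactors[OF assms] .
  obtain h s' t' x y where h: "g = h * x" "c = h * y" "s' * x + t' * y = 1"
    using bezout_domain_gcd_cofactors[OF assms] .
  have "(s' * s) * (x * u) + (s' * t) * (x * w) + t' * y = s' * x * (s * u + t * w) + t' * y"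
    by (simp add: algebra_simps)
  with g h show thesis
    by (intro that[of h "x * u" "x * w" y "s' * s" "s' * t" t']) (simp_all add: mult.assoc)
qed

lemma gcd_one_lincomb: "l * x + m * y = (1::'a::comm_ring_1) \<Longrightarrow> gcd_one x y"
  unfolding gcd_one_def by (metis dvd_add dvd_mult)

lemma bezout_domain_gcd_one_lincomb:
  assumes "bezout_domain TYPE('a::idom)" and "gcd_one x (y::'a)"
  obtains l m where "l * x + m * y = 1"
proof -
  obtain d s t where d: "d = s * x + t * y" "d dvd x" "d dvd y"
    using bezout_domain_gcd[OF assms(1)] .
  then obtain v where v: "1 = d * v"
    using assms(2) unfolding gcd_one_def by (blast elim: dvdE)
  have "(v * s) * x + (v * t) * y = d * v"
    using d(1) by (simp add: algebra_simps)
  with v show thesis by (intro that) simp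
qed

lemma gcd_one_commute: "gcd_one x y \<longleftrightarrow> gcd_one y x"
  unfolding gcd_one_def by blast

lemma gcd_one_dvd: "gcd_one x y \<Longrightarrow> x' dvd x \<Longrightarrow> y' dvd y \<Longrightarrow> gcd_one x' y'"
  unfolding gcd_one_def by (meson dvd_trans)

lemma gcd_one_add_mult: "gcd_one x (y + r * x) \<longleftrightarrow> gcd_one x (y::'a::comm_ring_1)"
  unfolding gcd_one_def by (meson dvd_add_left_iff dvd_mult)

lemma gcd_one_mult_right:
  assumes "bezout_domain TYPE('a::idom)" and "gcd_one x y" "gcd_one x (z::'a)"
  shows "gcd_one x (y * z)"
proof -
  obtain l m where lm: "l * x + m * y = 1"
    using bezout_domain_gcd_one_lincomb[OF assms(1,2)] .
  obtain l' m' where lm': "l' * x + m' * z = 1"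
    using bezout_domain_gcd_one_lincomb[OF assms(1,3)] .
  have "(l * l' * x + l * m' * z + m * y * l') * x + (m * m') * (y * z)
      = (l * x + m * y) * (l' * x + m' * z)"
    by (simp add: algebra_simps)
  with lm lm' show ?thesis by (intro gcd_one_lincomb) simp
qed

lemma gcd_one_mult_left:
  assumes "bezout_domain TYPE('a::idom)" and "gcd_one x z" "gcd_one y (z::'a)"
  shows "gcd_one (x * y) z"
  using gcd_one_mult_right[OF assms(1), of z x y] assms(2,3) gcd_one_commute by blast

lemma gcd_one_dvd_mult_cancel:
  assumes "bezout_domain TYPE('a::idom)" and "gcd_one x y" "x dvd y * (z::'a)"
  shows "x dvd z"
proof -
  obtain l m where lm: "l * x + m * y = 1"
    using bezout_domain_gcd_one_lincomb[OF assms(1,2)] .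
  have "z = (l * x + m * y) * z"
    using lm by simp
  also have "\<dots> = x * (l * z) + m * (y * z)"
    by (simp add: algebra_simps)
  finally have z: "z = x * (l * z) + m * (y * z)" .
  have "x dvd x * (l * z) + m * (y * z)"
    using assms(3) by (simp add: dvd_mult)
  then show ?thesis using z by simp
qed

section \<open>Kaplansky's criterion\<close>

definition gcd_one3 :: "'a::comm_ring_1 \<Rightarrow> 'a \<Rightarrow> 'a \<Rightarrow> bool" where
  "gcd_one3 a b c \<longleftrightarrow> (\<forall>d. d dvd a \<longrightarrow> d dvd b \<longrightarrow> d dvd c \<longrightarrow> d dvd 1)"

definition kaplansky_condition :: "'a::comm_ring_1 itself \<Rightarrow> bool" where
  "kaplansky_condition _ \<longleftrightarrow>
     (\<forall>a b c::'a. gcd_one3 a b c \<longrightarrow> (\<exists>p q. gcd_one (a * p) (b * p + c * q)))"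

definition factorization_condition :: "'a::comm_ring_1 itself \<Rightarrow> bool" where
  "factorization_condition _ \<longleftrightarrow>
     (\<forall>a1 a2 b1 b2 :: 'a. gcd_one a1 a2 \<longrightarrow> gcd_one b1 b2 \<longrightarrow>
       (\<exists>r \<alpha> \<beta>. b1 + r * b2 = \<alpha> * \<beta> \<and>
                 gcd_one \<alpha> \<beta> \<and> gcd_one a1 \<alpha> \<and> gcd_one a2 \<beta>))"

lemma gcd_one3_lincomb: "l * a + m * b + n * c = (1::'a::comm_ring_1) \<Longrightarrow> gcd_one3 a b c"
  unfolding gcd_one3_def by (metis dvd_add dvd_mult)

lemma factorization_condition_imp_kaplansky:
  assumes bezout: "bezout_domain TYPE('a::idom)"
    and factorization: "factorization_condition TYPE('a)"
  shows "kaplansky_condition TYPE('a)"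
  unfolding kaplansky_condition_def
proof (intro allI impI)
  fix a b c :: 'a
  assume "gcd_one3 a b c"
  obtain h b' c' s t where h: "b = h * b'" "c = h * c'" "s * b' + t * c' = 1"
    using bezout_domain_gcd_cofactors[OF bezout] .
  have "gcd_one a h"
    using \<open>gcd_one3 a b c\<close> h(1,2) unfolding gcd_one_def gcd_one3_def by (meson dvd_mult2)
  moreover have "gcd_one b' c'"
    using h(3) by (rule gcd_one_lincomb)
  ultimately obtain r \<alpha> \<beta> where split: "b' + r * c' = \<alpha> * \<beta>"
    and coprime: "gcd_one \<alpha> \<beta>" "gcd_one a \<alpha>" "gcd_one h \<beta>"
    using factorization unfolding factorization_condition_def by blast
  have "gcd_one (b' + r * c') c'"
    using \<open>gcd_one b' c'\<close> gcd_one_add_mult gcd_one_commute by blast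
  then have "gcd_one \<beta> c'"
    unfolding split by (rule gcd_one_dvd) simp_all
  then have "gcd_one \<beta> (c' * h * \<alpha>)"
    using coprime gcd_one_commute by (blast intro: gcd_one_mult_right[OF bezout])
  then obtain p k where pk: "p * \<beta> + k * (c' * h * \<alpha>) = 1"
    using bezout_domain_gcd_one_lincomb[OF bezout] by blast
  define q where "q = k * h * \<alpha> * \<alpha> + p * r"
  have "p * b' + c' * q = \<alpha> * (p * \<beta> + k * (c' * h * \<alpha>)) + p * (b' + r * c' - \<alpha> * \<beta>)"
    unfolding q_def by (simp add: algebra_simps)
  then have "p * b' + c' * q = \<alpha>"
    unfolding pk split by simp
  moreover have "b * p + c * q = h * (p * b' + c' * q)"
    unfolding h(1,2) by (simp add: algebra_simps)
  ultimately have "b * p + c * q = h * \<alpha>"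
    by simp
  moreover have "gcd_one p (c' * h * \<alpha>)"
    using pk by (intro gcd_one_lincomb[of \<beta> _ k]) (simp add: mult.commute)
  then have "gcd_one p h" "gcd_one p \<alpha>"
    by (auto elim: gcd_one_dvd)
  ultimately have "gcd_one (a * p) (b * p + c * q)"
    using coprime \<open>gcd_one a h\<close>
    by (simp add: gcd_one_mult_left[OF bezout] gcd_one_mult_right[OF bezout])
  then show "\<exists>p q. gcd_one (a * p) (b * p + c * q)" by blast
qed

lemma kaplansky_imp_factorization_condition:
  assumes bezout: "bezout_domain TYPE('a::idom)"
    and kaplansky: "kaplansky_condition TYPE('a)"
  shows "factorization_condition TYPE('a)"
  unfolding factorization_condition_def
proof (intro allI impI)
  fix a1 a2 b1 b2 :: 'a
  assume a: "gcd_one a1 a2" and b: "gcd_one b1 b2"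
  have "gcd_one3 a1 (a2 * b1) (a2 * b2)"
    unfolding gcd_one3_def
  proof (intro allI impI)
    fix d assume d: "d dvd a1" "d dvd a2 * b1" "d dvd a2 * b2"
    have "gcd_one d a2" using gcd_one_dvd[OF a d(1) dvd_refl] .
    then have "d dvd b1" "d dvd b2"
      using gcd_one_dvd_mult_cancel[OF bezout] d(2,3) by blast+
    then show "d dvd 1" using b unfolding gcd_one_def by blast
  qed
  then obtain p t where "gcd_one (a1 * p) (a2 * b1 * p + a2 * b2 * t)"
    using kaplansky unfolding kaplansky_condition_def by blast
  moreover define w where "w = b1 * p + b2 * t"
  ultimately have pw: "gcd_one (a1 * p) (a2 * w)"
    by (simp add: algebra_simps)
  have a1w: "gcd_one a1 w" and pa2: "gcd_one p a2" and pw': "gcd_one p w"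
    using pw by (auto elim: gcd_one_dvd)
  have "gcd_one p (b2 * t)"
    using pw' gcd_one_add_mult[of p "b2 * t" b1] unfolding w_def by (simp add: add.commute)
  then have "gcd_one p b2"
    by (rule gcd_one_dvd) simp_all
  then have "gcd_one p (b2 * a2 * w)"
    using pa2 pw' by (intro gcd_one_mult_right[OF bezout])
  then obtain p' k where pk: "p' * p + k * (b2 * a2 * w) = 1"
    using bezout_domain_gcd_one_lincomb[OF bezout] by blast
  define r where "r = t * p' - k * a2 * w * b1"
  have "b1 + r * b2 = w * p' + b1 * (1 - (p' * p + k * (b2 * a2 * w)))"
    unfolding r_def w_def by (simp add: algebra_simps)
  then have "b1 + r * b2 = w * p'"
    unfolding pk by simp
  moreover have "gcd_one w p'"
    by (rule gcd_one_lincomb[of "k * b2 * a2" _ p]) (use pk in \<open>simp add: algebra_simps\<close>)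
  moreover have "gcd_one a2 p'"
    by (rule gcd_one_lincomb[of "k * b2 * w" _ p]) (use pk in \<open>simp add: algebra_simps\<close>)
  ultimately show "\<exists>r \<alpha> \<beta>. b1 + r * b2 = \<alpha> * \<beta> \<and> gcd_one \<alpha> \<beta> \<and> gcd_one a1 \<alpha> \<and> gcd_one a2 \<beta>"
    using a1w by blast
qed

definition bilinear_gcd_exists :: "nat \<Rightarrow> nat \<Rightarrow> (nat \<Rightarrow> nat \<Rightarrow> 'a::comm_ring_1) \<Rightarrow> bool" where
  "bilinear_gcd_exists m n f \<longleftrightarrow>
     (\<exists>x y. \<forall>i<m. \<forall>j<n. (\<Sum>i<m. \<Sum>j<n. x i * f i j * y j) dvd f i j)"

lemma bezout_domain_linear_gcd:
  fixes g :: "nat \<Rightarrow> 'a::idom"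
  assumes bezout: "bezout_domain TYPE('a)"
  shows "\<exists>z. \<forall>j<n. (\<Sum>k<n. g k * z k) dvd g j"
proof (induction n)
  case 0
  then show ?case by simp
next
  case (Suc n)
  then obtain z where z: "\<forall>j<n. (\<Sum>k<n. g k * z k) dvd g j" by blast
  obtain d s t where d: "d = s * (\<Sum>k<n. g k * z k) + t * g n"
    "d dvd (\<Sum>k<n. g k * z k)" "d dvd g n"
    using bezout_domain_gcd[OF bezout] .
  define z' where "z' = (\<lambda>j. if j = n then t else s * z j)"
  have "(\<Sum>k<Suc n. g k * z' k) = (\<Sum>k<n. s * (g k * z k)) + g n * t"
    by (simp add: z'_def mult.left_commute)
  also have "\<dots> = d"
    unfolding d(1) by (simp add: sum_distrib_left mult.commute)
  finally have "(\<Sum>k<Suc n. g k * z' k) = d" .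
  moreover have "\<forall>j<Suc n. d dvd g j"
    using d(2,3) z less_Suc_eq by (auto intro: dvd_trans)
  ultimately show ?case by metis
qed

lemma kaplansky_bilinear_gcd_2x2:
  fixes a00 a01 a10 a11 :: "'a::idom"
  assumes bezout: "bezout_domain TYPE('a)" and kaplansky: "kaplansky_condition TYPE('a)"
  shows "\<exists>x0 x1 y0 y1. \<forall>a \<in> {a00, a01, a10, a11}.
           x0 * (a00 * y0 + a01 * y1) + x1 * (a10 * y0 + a11 * y1) dvd a"
proof -
  obtain g u w s t where g: "a00 = g * u" "a01 = g * w" "s * u + t * w = 1"
    using bezout_domain_gcd_cofactors[OF bezout] .
  \<comment> \<open>the unimodular column operation with rows \<open>(s, -w)\<close> and \<open>(t, u)\<close> turns the first row into \<open>(g, 0)\<close>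
     and the second one into \<open>(b, c)\<close>\<close>
  define b where "b = s * a10 + t * a11"
  define c where "c = - w * a10 + u * a11"
  have "b * u - c * t = a10 * (s * u + t * w)" "b * w + c * s = a11 * (s * u + t * w)"
    unfolding b_def c_def by (simp_all add: algebra_simps)
  then have a1: "a10 = b * u - c * t" "a11 = b * w + c * s"
    unfolding g(3) by simp_all
  obtain h g' b' c' l0 l1 l2 where h: "g = h * g'" "b = h * b'" "c = h * c'"
    "l0 * g' + l1 * b' + l2 * c' = 1"
    using bezout_domain_gcd_cofactors3[OF bezout] .
  have "gcd_one3 g' b' c'"
    using h(4) by (rule gcd_one3_lincomb)
  then obtain p q where "gcd_one (g' * p) (b' * p + c' * q)"
    using kaplansky unfolding kaplansky_condition_def by blast
  then obtain l m where lm: "l * (g' * p) + m * (b' * p + c' * q) = 1"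
    using bezout_domain_gcd_one_lincomb[OF bezout] by blast
  define y0 where "y0 = s * p - w * q"
  define y1 where "y1 = t * p + u * q"
  have "a00 * y0 + a01 * y1 = g * p * (s * u + t * w)"
    unfolding g(1,2) y0_def y1_def by (simp add: algebra_simps)
  moreover have "a10 * y0 + a11 * y1 = b * p + c * q"
    unfolding b_def c_def y0_def y1_def by (simp add: algebra_simps)
  ultimately have "l * (a00 * y0 + a01 * y1) + m * (a10 * y0 + a11 * y1)
      = h * (l * (g' * p) + m * (b' * p + c' * q))"
    unfolding g(3) h(1-3) by (simp add: algebra_simps)
  also have "\<dots> = h"
    unfolding lm by simp
  finally show ?thesis
    using g(1,2) a1 h(1-3) by (intro exI[of _ l] exI[of _ m] exI[of _ y0] exI[of _ y1]) auto
qed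

lemma kaplansky_bilinear_gcd:
  fixes f :: "nat \<Rightarrow> nat \<Rightarrow> 'a::idom"
  assumes bezout: "bezout_domain TYPE('a)" and kaplansky: "kaplansky_condition TYPE('a)"
  shows "bilinear_gcd_exists m n f"
proof (induction m)
  case 0
  then show ?case unfolding bilinear_gcd_exists_def by simp
next
  case (Suc m)
  then obtain x y where xy: "\<forall>i<m. \<forall>j<n. (\<Sum>i<m. \<Sum>j<n. x i * f i j * y j) dvd f i j"
    unfolding bilinear_gcd_exists_def by blast
  obtain z where z: "\<forall>j<n. (\<Sum>j<n. f m j * z j) dvd f m j"
    using bezout_domain_linear_gcd[OF bezout] by blast
  \<comment> \<open>combine the old rows (via \<open>x\<close>) and the new row into a \<open>2 \<times> 2\<close> matrix with columns \<open>z\<close> and \<open>y\<close>\<close>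
  define N00 where "N00 = (\<Sum>j<n. f m j * z j)"
  define N01 where "N01 = (\<Sum>j<n. f m j * y j)"
  define N10 where "N10 = (\<Sum>i<m. \<Sum>j<n. x i * f i j * z j)"
  define N11 where "N11 = (\<Sum>i<m. \<Sum>j<n. x i * f i j * y j)"
  obtain p0 p1 q0 q1 where pq: "\<forall>a \<in> {N00, N01, N10, N11}.
      p0 * (N00 * q0 + N01 * q1) + p1 * (N10 * q0 + N11 * q1) dvd a"
    using kaplansky_bilinear_gcd_2x2[OF bezout kaplansky] by blast
  define X where "X = (\<lambda>i. if i = m then p0 else p1 * x i)"
  define Y where "Y = (\<lambda>j. q0 * z j + q1 * y j)"
  have "(\<Sum>i<m. \<Sum>j<n. X i * f i j * Y j)
      = (\<Sum>i<m. \<Sum>j<n. p1 * q0 * (x i * f i j * z j) + p1 * q1 * (x i * f i j * y j))"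
    by (intro sum.cong refl) (simp add: X_def Y_def algebra_simps)
  also have "\<dots> = p1 * (N10 * q0 + N11 * q1)"
    unfolding N10_def N11_def by (simp add: sum.distrib sum_distrib_left algebra_simps)
  finally have old: "(\<Sum>i<m. \<Sum>j<n. X i * f i j * Y j) = p1 * (N10 * q0 + N11 * q1)" .
  have "(\<Sum>j<n. X m * f m j * Y j) = (\<Sum>j<n. p0 * q0 * (f m j * z j) + p0 * q1 * (f m j * y j))"
    by (intro sum.cong refl) (simp add: X_def Y_def algebra_simps)
  also have "\<dots> = p0 * (N00 * q0 + N01 * q1)"
    unfolding N00_def N01_def by (simp add: sum.distrib sum_distrib_left algebra_simps)
  finally have new: "(\<Sum>j<n. X m * f m j * Y j) = p0 * (N00 * q0 + N01 * q1)" .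
  have "\<forall>i<Suc m. \<forall>j<n. (\<Sum>i<Suc m. \<Sum>j<n. X i * f i j * Y j) dvd f i j"
  proof (intro allI impI)
    fix i j assume i: "i < Suc m" and j: "j < n"
    have "N00 dvd f m j" "i < m \<longrightarrow> N11 dvd f i j"
      using z xy j unfolding N00_def N11_def by blast+
    then show "(\<Sum>i<Suc m. \<Sum>j<n. X i * f i j * Y j) dvd f i j"
      using pq i unfolding sum.lessThan_Suc old new
      by (cases "i = m") (auto simp: add.commute intro: dvd_trans)
  qed
  then show ?case unfolding bilinear_gcd_exists_def by blast
qed

section \<open>Matrices over commutative rings\<close>

lemma invertible_matI:
  assumes "A \<in> carrier_mat n n" "B \<in> carrier_mat n n" "A * B = 1\<^sub>m n" "B * A = 1\<^sub>m n"
  shows "invertible_mat A"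
  using assms unfolding invertible_mat_def inverts_mat_def by auto

lemma invertible_matE:
  assumes "invertible_mat A" "A \<in> carrier_mat n n"
  obtains B where "B \<in> carrier_mat n n" "A * B = 1\<^sub>m n" "B * A = 1\<^sub>m n"
proof -
  obtain B where B: "A * B = 1\<^sub>m (dim_row A)" "B * A = 1\<^sub>m (dim_row B)"
    using assms(1) unfolding invertible_mat_def inverts_mat_def by blast
  have "dim_col B = n" "dim_row B = n"
    using arg_cong[OF B(1), of dim_col] arg_cong[OF B(2), of dim_col] assms(2) by auto
  then show thesis using B assms(2) by (intro that[of B]) auto
qed

lemma invertible_mat_iff_Units:
  assumes "A \<in> carrier_mat n n"
  shows "invertible_mat A \<longleftrightarrow> A \<in> Units (ring_mat TYPE('a::semiring_1) n b)"
  using assms by (auto simp: Units_def ring_mat_def elim!: invertible_matE intro: invertible_matI)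

lemma invertible_mat_one: "invertible_mat (1\<^sub>m n :: 'a::semiring_1 mat)"
  by (rule invertible_matI[of _ n "1\<^sub>m n"]) auto

lemma invertible_mat_mult:
  fixes A B :: "'a::semiring_1 mat"
  assumes "A \<in> carrier_mat n n" "invertible_mat A" "B \<in> carrier_mat n n" "invertible_mat B"
  shows "invertible_mat (A * B)"
proof -
  let ?R = "ring_mat TYPE('a) n ()"
  interpret semiring ?R by (rule semiring_mat)
  have "A \<otimes>\<^bsub>?R\<^esub> B \<in> Units ?R"
    using assms by (intro Units_m_closed) (simp_all add: invertible_mat_iff_Units[where b = "()"])
  moreover have "A * B \<in> carrier_mat n n"
    using assms by simp
  ultimately show ?thesis
    by (simp add: invertible_mat_iff_Units[where b = "()"] ring_mat_simps)
qed

lemma assoc_mult_mat_sandwich: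
  assumes "X \<in> carrier_mat m m" "P \<in> carrier_mat m m" "A \<in> carrier_mat m n"
    "Q \<in> carrier_mat n n" "Y \<in> carrier_mat n n"
  shows "X * P * A * (Q * Y) = X * (P * A * Q) * Y"
proof -
  have XPA: "X * P * A = X * (P * A)"
    using assms(1-3) by (rule assoc_mult_mat)
  have "X * P * A * (Q * Y) = X * P * A * Q * Y"
    using assms by (intro assoc_mult_mat[symmetric, of _ m n]) auto
  also have "X * P * A * Q = X * (P * A * Q)"
    unfolding XPA using assms by (intro assoc_mult_mat[of _ m m _ n]) auto
  finally show ?thesis .
qed

lemma invertible_four_block_diag:
  fixes A :: "'a::comm_ring_1 mat"
  assumes "A \<in> carrier_mat n1 n1" "invertible_mat A" "D \<in> carrier_mat n2 n2" "invertible_mat D"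
  shows "invertible_mat (four_block_mat A (0\<^sub>m n1 n2) (0\<^sub>m n2 n1) D)"
proof -
  obtain A' where A': "A' \<in> carrier_mat n1 n1" "A * A' = 1\<^sub>m n1" "A' * A = 1\<^sub>m n1"
    using invertible_matE assms(1,2) by blast
  obtain D' where D': "D' \<in> carrier_mat n2 n2" "D * D' = 1\<^sub>m n2" "D' * D = 1\<^sub>m n2"
    using invertible_matE assms(3,4) by blast
  show ?thesis
  proof (rule invertible_matI)
    show "four_block_mat A (0\<^sub>m n1 n2) (0\<^sub>m n2 n1) D * four_block_mat A' (0\<^sub>m n1 n2) (0\<^sub>m n2 n1) D'
        = 1\<^sub>m (n1 + n2)"
      using assms A' D' by (subst mult_four_block_mat[of _ n1 n1 _ n2 _ n2 _ _ n1 _ n2]) auto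
    show "four_block_mat A' (0\<^sub>m n1 n2) (0\<^sub>m n2 n1) D' * four_block_mat A (0\<^sub>m n1 n2) (0\<^sub>m n2 n1) D
        = 1\<^sub>m (n1 + n2)"
      using assms A' D' by (subst mult_four_block_mat[of _ n1 n1 _ n2 _ n2 _ _ n1 _ n2]) auto
  qed (use assms A' D' in auto)
qed

lemma index_mult_mat_sum:
  assumes "A \<in> carrier_mat m k" "B \<in> carrier_mat k n" "i < m" "j < n"
  shows "(A * B) $$ (i, j) = (\<Sum>l<k. A $$ (i, l) * B $$ (l, j))"
  using assms by (auto simp: scalar_prod_def atLeast0LessThan intro!: sum.cong)

lemma index_mult_mat_vec_sum:
  assumes "A \<in> carrier_mat m k" "v \<in> carrier_vec k" "i < m"
  shows "(A *\<^sub>v v) $ i = (\<Sum>l<k. A $$ (i, l) * v $ l)"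
  using assms by (auto simp: scalar_prod_def atLeast0LessThan intro!: sum.cong)

lemma index_mult_mat_vec_first_only:
  fixes A :: "'a::comm_ring_1 mat"
  assumes "A \<in> carrier_mat m k" "v \<in> carrier_vec k" "i < m" "0 < k"
    and "\<forall>l. 0 < l \<and> l < k \<longrightarrow> v $ l = 0"
  shows "(A *\<^sub>v v) $ i = A $$ (i, 0) * v $ 0"
proof -
  have "(A *\<^sub>v v) $ i = (\<Sum>l<k. if l = 0 then A $$ (i, 0) * v $ 0 else 0)"
    unfolding index_mult_mat_vec_sum[OF assms(1-3)] using assms(5) by (intro sum.cong) auto
  then show ?thesis using assms(4) by simp
qed

lemma four_block_diag_mult_vec:
  assumes "A \<in> carrier_mat n1 n1" "D \<in> carrier_mat n2 n2" "v \<in> carrier_vec (n1 + n2)"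
  shows "four_block_mat A (0\<^sub>m n1 n2) (0\<^sub>m n2 n1) D *\<^sub>v v
    = (A *\<^sub>v vec_first v n1) @\<^sub>v (D *\<^sub>v vec_last v n2)"
proof -
  have "four_block_mat A (0\<^sub>m n1 n2) (0\<^sub>m n2 n1) D *\<^sub>v (vec_first v n1 @\<^sub>v vec_last v n2)
    = (A *\<^sub>v vec_first v n1 + 0\<^sub>m n1 n2 *\<^sub>v vec_last v n2) @\<^sub>v
      (0\<^sub>m n2 n1 *\<^sub>v vec_first v n1 + D *\<^sub>v vec_last v n2)"
    using assms by (intro four_block_mat_mult_vec) auto
  also have "\<dots> = (A *\<^sub>v vec_first v n1) @\<^sub>v (D *\<^sub>v vec_last v n2)"
    using assms by (auto intro!: arg_cong2[where f = append_vec] eq_vecI simp: scalar_prod_def)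
  finally show ?thesis using assms(3) by simp
qed

definition dvd_entries :: "'a::comm_ring_1 \<Rightarrow> 'a mat \<Rightarrow> bool" where
  "dvd_entries c A \<longleftrightarrow> (\<forall>i<dim_row A. \<forall>j<dim_col A. c dvd A $$ (i, j))"

lemma dvd_entries_trans: "c dvd e \<Longrightarrow> dvd_entries e A \<Longrightarrow> dvd_entries c A"
  unfolding dvd_entries_def by (meson dvd_trans)

lemma dvd_entries_mult_left:
  assumes "dvd_entries c A" "A \<in> carrier_mat m n" "P \<in> carrier_mat k m"
  shows "dvd_entries c (P * A)"
  unfolding dvd_entries_def
proof (intro allI impI)
  fix i j assume "i < dim_row (P * A)" "j < dim_col (P * A)"
  then have ij: "i < k" "j < n"
    using assms by auto
  show "c dvd (P * A) $$ (i, j)"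
    using assms(1,2) ij unfolding dvd_entries_def index_mult_mat_sum[OF assms(3,2) ij]
    by (auto intro!: dvd_sum dvd_mult)
qed

lemma dvd_entries_mult_right:
  assumes "dvd_entries c A" "A \<in> carrier_mat m n" "Q \<in> carrier_mat n l"
  shows "dvd_entries c (A * Q)"
  unfolding dvd_entries_def
proof (intro allI impI)
  fix i j assume "i < dim_row (A * Q)" "j < dim_col (A * Q)"
  then have ij: "i < m" "j < l"
    using assms by auto
  show "c dvd (A * Q) $$ (i, j)"
    using assms(1,2) ij unfolding dvd_entries_def index_mult_mat_sum[OF assms(2,3) ij]
    by (auto intro!: dvd_sum dvd_mult2)
qed

lemma dvd_entries_mult:
  assumes "dvd_entries c A" "A \<in> carrier_mat m n" "P \<in> carrier_mat k m" "Q \<in> carrier_mat n l"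
  shows "dvd_entries c (P * A * Q)"
  using assms by (auto intro: dvd_entries_mult_right dvd_entries_mult_left)

lemma dvd_entries_invertible_cancel:
  fixes A :: "'a::comm_ring_1 mat"
  assumes "A \<in> carrier_mat m n" "P \<in> carrier_mat m m" "invertible_mat P"
    "Q \<in> carrier_mat n n" "invertible_mat Q" and "dvd_entries c (P * A * Q)"
  shows "dvd_entries c A"
proof -
  obtain P' where P': "P' \<in> carrier_mat m m" "P' * P = 1\<^sub>m m"
    using invertible_matE assms(2,3) by blast
  obtain Q' where Q': "Q' \<in> carrier_mat n n" "Q * Q' = 1\<^sub>m n"
    using invertible_matE assms(4,5) by blast
  have PA: "P * A \<in> carrier_mat m n" and PAQ: "P * A * Q \<in> carrier_mat m n"
    using assms by auto
  have "P' * (P * A * Q) * Q' = P' * (P * A * (Q * Q'))"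
    using assoc_mult_mat[OF P'(1) PAQ Q'(1)] assoc_mult_mat[OF PA assms(4) Q'(1)] by simp
  also have "\<dots> = (P' * P) * A"
    unfolding Q'(2) using assoc_mult_mat[OF P'(1) assms(2,1)] right_mult_one_mat[OF PA] by simp
  also have "\<dots> = A"
    unfolding P'(2) using assms(1) by simp
  finally show ?thesis
    using dvd_entries_mult[OF assms(6) PAQ P'(1) Q'(1)] by simp
qed

lemma smith_diag_dvd_entries:
  assumes "smith_diag D" "0 < dim_row D" "0 < dim_col D"
  shows "dvd_entries (D $$ (0, 0)) D"
proof -
  have diag: "D $$ (0, 0) dvd D $$ (i, i)" if "i < min (dim_row D) (dim_col D)" for i
    using that
  proof (induction i)
    case (Suc i)
    then show ?case
      using assms(1) unfolding smith_diag_def by (auto intro: dvd_trans)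
  qed simp
  show ?thesis
    unfolding dvd_entries_def
  proof (intro allI impI)
    fix i j assume "i < dim_row D" "j < dim_col D"
    then show "D $$ (0, 0) dvd D $$ (i, j)"
      using assms(1) diag unfolding smith_diag_def by (cases "i = j") auto
  qed
qed

lemma smith_diag_four_block:
  fixes c :: "'a::comm_ring_1"
  assumes D: "D \<in> carrier_mat m n" "smith_diag D" and "dvd_entries c D"
  shows "smith_diag (four_block_mat (mat 1 1 (\<lambda>_. c)) (0\<^sub>m 1 n) (0\<^sub>m m 1) D)"
    (is "smith_diag ?F")
  unfolding smith_diag_def
proof (intro conjI allI impI)
  fix i j assume "i < dim_row ?F" "j < dim_col ?F" "i \<noteq> j"
  then show "?F $$ (i, j) = 0"
    using D by (cases "i = 0 \<or> j = 0") (auto simp: smith_diag_def)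
next
  fix i assume "Suc i < min (dim_row ?F) (dim_col ?F)"
  then show "?F $$ (i, i) dvd ?F $$ (Suc i, Suc i)"
    using D assms(3) by (cases i) (auto simp: smith_diag_def dvd_entries_def)
qed

definition mat2 :: "'a \<Rightarrow> 'a \<Rightarrow> 'a \<Rightarrow> 'a \<Rightarrow> 'a mat" where
  "mat2 a b c d = mat 2 2 (\<lambda>(i, j). if i = 0 then (if j = 0 then a else b) else (if j = 0 then c else d))"

lemma mat2_carrier [simp]: "mat2 a b c d \<in> carrier_mat 2 2"
  unfolding mat2_def by auto

lemma mat2_dim [simp]: "dim_row (mat2 a b c d) = 2" "dim_col (mat2 a b c d) = 2"
  unfolding mat2_def by auto

lemma sum_lessThan_2: "(\<Sum>l<2. f l) = f 0 + f (1::nat)"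
  by (simp add: numeral_2_eq_2)

lemma less_2_cases: "(i::nat) < 2 \<Longrightarrow> i = 0 \<or> i = 1"
  by auto

lemma index_mat2:
  "i < 2 \<Longrightarrow> j < 2 \<Longrightarrow>
    mat2 a b c d $$ (i, j) = (if i = 0 then (if j = 0 then a else b) else (if j = 0 then c else d))"
  unfolding mat2_def by simp

lemma mat2_mult:
  fixes a :: "'a::comm_ring_1"
  shows "mat2 a b c d * mat2 a' b' c' d'
    = mat2 (a * a' + b * c') (a * b' + b * d') (c * a' + d * c') (c * b' + d * d')"
proof (rule eq_matI)
  fix i j assume "i < dim_row (mat2 (a * a' + b * c') (a * b' + b * d') (c * a' + d * c') (c * b' + d * d'))"
    "j < dim_col (mat2 (a * a' + b * c') (a * b' + b * d') (c * a' + d * c') (c * b' + d * d'))"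
  then have ij: "i < 2" "j < 2" by simp_all
  then show "(mat2 a b c d * mat2 a' b' c' d') $$ (i, j)
    = mat2 (a * a' + b * c') (a * b' + b * d') (c * a' + d * c') (c * b' + d * d') $$ (i, j)"
    unfolding index_mult_mat_sum[OF mat2_carrier mat2_carrier ij] sum_lessThan_2
    by (auto simp: index_mat2)
qed simp_all

lemma mat2_one: "mat2 1 0 0 1 = (1\<^sub>m 2 :: 'a::comm_ring_1 mat)"
  by (rule eq_matI) (auto simp: index_mat2 dest!: less_2_cases)

lemma bezout_domain_clear_pair:
  fixes a b :: "'a::idom"
  assumes bezout: "bezout_domain TYPE('a)"
  obtains U where "U \<in> carrier_mat 2 2" "invertible_mat U"
    "\<And>v. v \<in> carrier_vec 2 \<Longrightarrow> v $ 0 = a \<Longrightarrow> v $ 1 = b \<Longrightarrow> (U *\<^sub>v v) $ 1 = 0"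
proof -
  obtain g s t u w where g: "a = g * u" "b = g * w" "s * u + t * w = 1"
    using bezout_domain_gcd_cofactors[OF bezout] .
  have "invertible_mat (mat2 s t (- w) u)"
  proof (rule invertible_matI)
    show "mat2 s t (- w) u * mat2 u (- t) w s = 1\<^sub>m 2" "mat2 u (- t) w s * mat2 s t (- w) u = 1\<^sub>m 2"
      unfolding mat2_mult mat2_one[symmetric] using g(3) by (simp_all add: algebra_simps)
  qed auto
  moreover have "(mat2 s t (- w) u *\<^sub>v v) $ 1 = 0"
    if "v \<in> carrier_vec 2" "v $ 0 = a" "v $ 1 = b" for v
  proof -
    have "(mat2 s t (- w) u *\<^sub>v v) $ 1 = - w * v $ 0 + u * v $ 1"
      using index_mult_mat_vec_sum[OF mat2_carrier that(1), of 1]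
      by (simp add: sum_lessThan_2 index_mat2)
    then show ?thesis
      using that g(1,2) by (simp add: algebra_simps)
  qed
  ultimately show thesis
    by (intro that[of "mat2 s t (- w) u"]) auto
qed

section \<open>Reduction to Smith form\<close>

lemma bezout_domain_clear_second_entry:
  fixes u :: "'a::idom vec"
  assumes bezout: "bezout_domain TYPE('a)" and u: "u \<in> carrier_vec (2 + k)"
  obtains G where "G \<in> carrier_mat (2 + k) (2 + k)" "invertible_mat G" "(G *\<^sub>v u) $ 1 = 0"
    "\<forall>i. 2 \<le> i \<and> i < 2 + k \<longrightarrow> (G *\<^sub>v u) $ i = u $ i"
proof -
  obtain U where U: "U \<in> carrier_mat 2 2" "invertible_mat U"
    "\<And>x. x \<in> carrier_vec 2 \<Longrightarrow> x $ 0 = u $ 0 \<Longrightarrow> x $ 1 = u $ 1 \<Longrightarrow> (U *\<^sub>v x) $ 1 = 0"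
    using bezout_domain_clear_pair[OF bezout] by metis
  define G where "G = four_block_mat U (0\<^sub>m 2 k) (0\<^sub>m k 2) (1\<^sub>m k)"
  have Gu: "G *\<^sub>v u = (U *\<^sub>v vec_first u 2) @\<^sub>v (1\<^sub>m k *\<^sub>v vec_last u k)"
    unfolding G_def using U(1) u by (intro four_block_diag_mult_vec) auto
  have "(U *\<^sub>v vec_first u 2) $ 1 = 0"
    using U(3) by (simp add: vec_first_def)
  then have "(G *\<^sub>v u) $ 1 = 0"
    unfolding Gu using U(1) by simp
  moreover have "(G *\<^sub>v u) $ i = u $ i" if "2 \<le> i" "i < 2 + k" for i
  proof -
    have "Suc (Suc (i - 2)) = i"
      using that(1) by simp
    then show ?thesis
      unfolding Gu using U(1) u that by (simp add: vec_last_def)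
  qed
  moreover have "G \<in> carrier_mat (2 + k) (2 + k)" "invertible_mat G"
    unfolding G_def using U(1,2) by (auto intro: invertible_four_block_diag invertible_mat_one)
  ultimately show thesis
    by (intro that) auto
qed

lemma bezout_domain_clear_vec_tail:
  fixes v :: "'a::idom vec"
  assumes bezout: "bezout_domain TYPE('a)"
  shows "v \<in> carrier_vec n \<Longrightarrow>
    \<exists>P. P \<in> carrier_mat n n \<and> invertible_mat P \<and> (\<forall>i. 0 < i \<and> i < n \<longrightarrow> (P *\<^sub>v v) $ i = 0)"
proof (induction n arbitrary: v)
  case 0
  then show ?case using invertible_mat_one by (intro exI[of _ "1\<^sub>m 0"]) auto
next
  case (Suc n)
  show ?case
  proof (cases n)
    case 0
    then show ?thesis using invertible_mat_one by (intro exI[of _ "1\<^sub>m 1"]) auto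
  next
    case (Suc k)
    \<comment> \<open>first clear all entries of the tail except its head, then clear that head against \<open>v $ 0\<close>\<close>
    define w where "w = vec_last v n"
    obtain P where P: "P \<in> carrier_mat n n" "invertible_mat P" "\<forall>i. 0 < i \<and> i < n \<longrightarrow> (P *\<^sub>v w) $ i = 0"
      using Suc.IH[of w] unfolding w_def by auto
    define B where "B = four_block_mat (1\<^sub>m 1) (0\<^sub>m 1 n) (0\<^sub>m n 1) P"
    have B: "B \<in> carrier_mat (Suc n) (Suc n)" "invertible_mat B"
      unfolding B_def using P by (auto intro: invertible_four_block_diag invertible_mat_one)
    have "B *\<^sub>v v = (1\<^sub>m 1 *\<^sub>v vec_first v 1) @\<^sub>v (P *\<^sub>v w)"
      unfolding B_def w_def using Suc.prems P(1) by (intro four_block_diag_mult_vec) auto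
    then have Bv: "\<And>i. i < n \<Longrightarrow> (B *\<^sub>v v) $ Suc i = (P *\<^sub>v w) $ i"
      using P(1) by auto
    have "B *\<^sub>v v \<in> carrier_vec (2 + k)"
      using B(1) Suc.prems Suc by simp
    then obtain G where G: "G \<in> carrier_mat (Suc n) (Suc n)" "invertible_mat G"
      "(G *\<^sub>v (B *\<^sub>v v)) $ 1 = 0" "\<forall>i. 2 \<le> i \<and> i < Suc n \<longrightarrow> (G *\<^sub>v (B *\<^sub>v v)) $ i = (B *\<^sub>v v) $ i"
      using bezout_domain_clear_second_entry[OF bezout] Suc by (metis add_2_eq_Suc)
    have "(G *\<^sub>v (B *\<^sub>v v)) $ i = 0" if "0 < i" "i < Suc n" for i
    proof (cases "i = 1")
      case False
      then show ?thesis
        using that G(4) Bv[of "i - 1"] P(3) by (cases i) auto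
    qed (use G(3) in simp)
    moreover have "(G * B) *\<^sub>v v = G *\<^sub>v (B *\<^sub>v v)"
      using G(1) B(1) Suc.prems by simp
    ultimately show ?thesis
      using G B invertible_mat_mult[OF G(1,2) B] by (intro exI[of _ "G * B"]) auto
  qed
qed

lemma four_block_diag_sandwich:
  fixes C :: "'a::comm_ring_1 mat"
  assumes "C \<in> carrier_mat k l" "A \<in> carrier_mat m n" "P \<in> carrier_mat m m" "Q \<in> carrier_mat n n"
  shows "four_block_mat (1\<^sub>m k) (0\<^sub>m k m) (0\<^sub>m m k) P * four_block_mat C (0\<^sub>m k n) (0\<^sub>m m l) A
      * four_block_mat (1\<^sub>m l) (0\<^sub>m l n) (0\<^sub>m n l) Q
    = four_block_mat C (0\<^sub>m k n) (0\<^sub>m m l) (P * A * Q)"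
proof -
  have "four_block_mat (1\<^sub>m k) (0\<^sub>m k m) (0\<^sub>m m k) P * four_block_mat C (0\<^sub>m k n) (0\<^sub>m m l) A
      = four_block_mat C (0\<^sub>m k n) (0\<^sub>m m l) (P * A)"
    using assms by (subst mult_four_block_mat[of _ k k _ m _ m _ _ l _ n]) auto
  moreover have "four_block_mat C (0\<^sub>m k n) (0\<^sub>m m l) (P * A) * four_block_mat (1\<^sub>m l) (0\<^sub>m l n) (0\<^sub>m n l) Q
      = four_block_mat C (0\<^sub>m k n) (0\<^sub>m m l) (P * A * Q)"
    using assms by (subst mult_four_block_mat[of _ k l _ n _ m _ _ l _ n]) auto
  ultimately show ?thesis by simp
qed

definition add_col0_mat :: "nat \<Rightarrow> (nat \<Rightarrow> 'a::comm_ring_1) \<Rightarrow> 'a mat" where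
  "add_col0_mat n f = mat n n (\<lambda>(i, j). if i = j then 1 else if i = 0 then f j else 0)"

lemma add_col0_mat_dim [simp]: "dim_row (add_col0_mat n f) = n" "dim_col (add_col0_mat n f) = n"
  unfolding add_col0_mat_def by simp_all

lemma add_col0_mat_carrier [simp]: "add_col0_mat n f \<in> carrier_mat n n"
  unfolding carrier_mat_def by simp

lemma index_mult_add_col0_mat:
  assumes "D \<in> carrier_mat m n" "i < m" "j < n"
  shows "(D * add_col0_mat n f) $$ (i, j)
    = (if j = 0 then D $$ (i, 0) else D $$ (i, j) + D $$ (i, 0) * f j)"
proof -
  have "(D * add_col0_mat n f) $$ (i, j)
      = (\<Sum>l<n. (if l = j then D $$ (i, j) else 0) + (if l = 0 \<and> j \<noteq> 0 then D $$ (i, 0) * f j else 0))"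
    unfolding index_mult_mat_sum[OF assms(1) add_col0_mat_carrier assms(2,3)]
    using assms(3) by (intro sum.cong) (auto simp: add_col0_mat_def)
  then show ?thesis
    using assms(3) by (simp add: sum.distrib)
qed

lemma add_col0_mat_mult_inverse:
  "add_col0_mat n f * add_col0_mat n (\<lambda>j. - f j) = 1\<^sub>m n"
proof (rule eq_matI)
  fix i j assume "i < dim_row (1\<^sub>m n :: 'a mat)" "j < dim_col (1\<^sub>m n :: 'a mat)"
  then have ij: "i < n" "j < n" by auto
  then show "(add_col0_mat n f * add_col0_mat n (\<lambda>j. - f j)) $$ (i, j) = 1\<^sub>m n $$ (i, j)"
    unfolding index_mult_add_col0_mat[OF add_col0_mat_carrier ij] by (auto simp: add_col0_mat_def)
qed simp_all

lemma invertible_add_col0_mat: "invertible_mat (add_col0_mat n f)"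
  using add_col0_mat_mult_inverse[of n f] add_col0_mat_mult_inverse[of n "\<lambda>j. - f j"]
  by (intro invertible_matI[of _ n "add_col0_mat n (\<lambda>j. - f j)"]) auto

lemma pivot_block_form:
  fixes D :: "'a::comm_ring_1 mat"
  assumes D: "D \<in> carrier_mat (Suc m) (Suc n)" and col0: "\<forall>i. 0 < i \<and> i < Suc m \<longrightarrow> D $$ (i, 0) = 0"
    and "dvd_entries (D $$ (0, 0)) D"
  obtains Q where "Q \<in> carrier_mat (Suc n) (Suc n)" "invertible_mat Q"
    "D * Q = four_block_mat (mat 1 1 (\<lambda>_. D $$ (0, 0))) (0\<^sub>m 1 n) (0\<^sub>m m 1)
      (mat m n (\<lambda>(i, j). D $$ (Suc i, Suc j)))"
proof -
  have "\<forall>j. \<exists>q. j < Suc n \<longrightarrow> D $$ (0, j) = D $$ (0, 0) * q"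
    using assms(3) D unfolding dvd_entries_def by (auto elim!: dvdE)
  then obtain f where f: "\<And>j. j < Suc n \<Longrightarrow> D $$ (0, j) = D $$ (0, 0) * f j"
    by (metis choice)
  let ?F = "four_block_mat (mat 1 1 (\<lambda>_. D $$ (0, 0))) (0\<^sub>m 1 n) (0\<^sub>m m 1)
    (mat m n (\<lambda>(i, j). D $$ (Suc i, Suc j)))"
  have "D * add_col0_mat (Suc n) (\<lambda>j. - f j) = ?F"
  proof (rule eq_matI)
    fix i j assume "i < dim_row ?F" "j < dim_col ?F"
    then have ij: "i < Suc m" "j < Suc n" by simp_all
    show "(D * add_col0_mat (Suc n) (\<lambda>j. - f j)) $$ (i, j) = ?F $$ (i, j)"
      unfolding index_mult_add_col0_mat[OF D ij] using ij col0 f[of j]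
      by (cases i; cases j) simp_all
  qed (use D in simp_all)
  then show thesis
    using invertible_add_col0_mat by (intro that) auto
qed

lemma first_column_dvd_pivot:
  fixes M :: "'a::comm_ring_1 mat"
  assumes M: "M \<in> carrier_mat m n" "0 < m" "0 < n" and P: "P \<in> carrier_mat m m" "invertible_mat P"
    and col0: "\<forall>i. 0 < i \<and> i < m \<longrightarrow> (P * M) $$ (i, 0) = 0" and "i < m"
  shows "(P * M) $$ (0, 0) dvd M $$ (i, 0)"
proof -
  obtain P' where P': "P' \<in> carrier_mat m m" "P' * P = 1\<^sub>m m"
    using invertible_matE[OF P(2,1)] by blast
  define w where "w = P *\<^sub>v col M 0"
  have w: "w \<in> carrier_vec m" "\<And>i. i < m \<Longrightarrow> w $ i = (P * M) $$ (i, 0)"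
    unfolding w_def using P(1) M by auto
  have "M $$ (i, 0) = col M 0 $ i"
    using M \<open>i < m\<close> by simp
  also have "col M 0 = P' *\<^sub>v w"
    unfolding w_def using P' P(1) M by (simp flip: assoc_mult_mat_vec)
  also have "(P' *\<^sub>v w) $ i = P' $$ (i, 0) * w $ 0"
    using index_mult_mat_vec_first_only[OF P'(1) w(1) \<open>i < m\<close> M(2)] w(2) col0 by simp
  finally have "M $$ (i, 0) = P' $$ (i, 0) * w $ 0" .
  then show ?thesis
    using w(2)[OF M(2)] by simp
qed

lemma bilinear_form_mult_mat_vec:
  assumes "A \<in> carrier_mat m n"
  shows "(\<Sum>i<m. \<Sum>j<n. x i * A $$ (i, j) * y j) = (\<Sum>i<m. x i * (A *\<^sub>v vec n y) $ i)"
proof (rule sum.cong[OF refl])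
  fix i assume "i \<in> {..<m}"
  then have "(A *\<^sub>v vec n y) $ i = (\<Sum>j<n. A $$ (i, j) * vec n y $ j)"
    using assms by (intro index_mult_mat_vec_sum) auto
  also have "\<dots> = (\<Sum>j<n. A $$ (i, j) * y j)"
    by (intro sum.cong) auto
  finally show "(\<Sum>j<n. x i * A $$ (i, j) * y j) = x i * (A *\<^sub>v vec n y) $ i"
    by (simp only: sum_distrib_left mult.assoc)
qed

lemma bilinear_gcd_pivot:
  fixes A :: "'a::idom mat"
  assumes bezout: "bezout_domain TYPE('a)" and A: "A \<in> carrier_mat m n" "0 < m" "0 < n"
    and gcd: "dvd_entries (\<Sum>i<m. \<Sum>j<n. x i * A $$ (i, j) * y j) A"
  obtains P Q where "P \<in> carrier_mat m m" "invertible_mat P" "Q \<in> carrier_mat n n" "invertible_mat Q"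
    "\<forall>i. 0 < i \<and> i < m \<longrightarrow> (P * A * Q) $$ (i, 0) = 0"
    "dvd_entries ((P * A * Q) $$ (0, 0)) (P * A * Q)"
proof -
  define yv where "yv = vec n y"
  have yv: "yv \<in> carrier_vec n"
    unfolding yv_def by simp
  obtain R where R: "R \<in> carrier_mat n n" "invertible_mat R" "\<forall>j. 0 < j \<and> j < n \<longrightarrow> (R *\<^sub>v yv) $ j = 0"
    using bezout_domain_clear_vec_tail[OF bezout yv] by blast
  obtain Q where Q: "Q \<in> carrier_mat n n" "R * Q = 1\<^sub>m n" "Q * R = 1\<^sub>m n"
    using invertible_matE[OF R(2,1)] by blast
  have Q_inv: "invertible_mat Q"
    using Q R(1) by (intro invertible_matI) auto
  define M where "M = A * Q"
  have M: "M \<in> carrier_mat m n" "col M 0 \<in> carrier_vec m"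
    unfolding M_def using A Q by auto
  obtain P where P: "P \<in> carrier_mat m m" "invertible_mat P"
    "\<forall>i. 0 < i \<and> i < m \<longrightarrow> (P *\<^sub>v col M 0) $ i = 0"
    using bezout_domain_clear_vec_tail[OF bezout M(2)] by blast
  have PAQ: "P * A * Q = P * M"
    unfolding M_def using P(1) A(1) Q(1) by simp
  have col0: "\<forall>i. 0 < i \<and> i < m \<longrightarrow> (P * A * Q) $$ (i, 0) = 0"
    unfolding PAQ using P M A(3) by simp
  define c where "c = (P * A * Q) $$ (0, 0)"
  \<comment> \<open>\<open>A y = M (R y)\<close> and \<open>R y\<close> is concentrated in its first entry, so \<open>A y\<close> is a multiple of
     the first column of \<open>M\<close>\<close>
  have "M *\<^sub>v (R *\<^sub>v yv) = A *\<^sub>v ((Q * R) *\<^sub>v yv)"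
    unfolding M_def using A(1) Q(1) R(1) yv by simp
  then have "A *\<^sub>v yv = M *\<^sub>v (R *\<^sub>v yv)"
    unfolding Q(3) using yv by simp
  then have "(A *\<^sub>v yv) $ i = M $$ (i, 0) * (R *\<^sub>v yv) $ 0" if "i < m" for i
    using index_mult_mat_vec_first_only[OF M(1) _ that A(3) R(3)] R(1) yv by simp
  moreover have "c dvd M $$ (i, 0)" if "i < m" for i
    unfolding c_def PAQ using first_column_dvd_pivot[OF M(1) A(2,3) P(1,2) col0[unfolded PAQ] that] .
  ultimately have "c dvd (\<Sum>i<m. \<Sum>j<n. x i * A $$ (i, j) * y j)"
    unfolding bilinear_form_mult_mat_vec[OF A(1)] yv_def[symmetric] by (auto intro!: dvd_sum)
  then have "dvd_entries c (P * A * Q)"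
    using dvd_entries_mult[OF gcd A(1) P(1) Q(1)] by (rule dvd_entries_trans)
  then show thesis
    using P Q(1) Q_inv col0 unfolding c_def by (intro that) auto
qed

definition has_smith_form :: "'a::comm_ring_1 mat \<Rightarrow> bool" where
  "has_smith_form A \<longleftrightarrow> (\<exists>P Q. P \<in> carrier_mat (dim_row A) (dim_row A) \<and> Q \<in> carrier_mat (dim_col A) (dim_col A) \<and>
     invertible_mat P \<and> invertible_mat Q \<and> smith_diag (P * A * Q))"

lemma elementary_divisor_ring_iff_has_smith_form:
  "elementary_divisor_ring TYPE('a::comm_ring_1) \<longleftrightarrow> (\<forall>A :: 'a mat. has_smith_form A)"
proof -
  have "has_smith_form A \<longleftrightarrow> (\<exists>P Q. P \<in> carrier_mat m m \<and> Q \<in> carrier_mat n n \<and>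
      invertible_mat P \<and> invertible_mat Q \<and> smith_diag (P * A * Q))"
    if "A \<in> carrier_mat m n" for m n and A :: "'a mat"
    using that unfolding has_smith_form_def by auto
  then show ?thesis
    unfolding elementary_divisor_ring_def using carrier_mat_triv by blast
qed

lemma has_smith_form_if_empty:
  "dim_row A = 0 \<or> dim_col A = 0 \<Longrightarrow> has_smith_form (A :: 'a::comm_ring_1 mat)"
  unfolding has_smith_form_def smith_diag_def using invertible_mat_one
  by (intro exI[of _ "1\<^sub>m (dim_row A)"] exI[of _ "1\<^sub>m (dim_col A)"]) auto

lemma has_smith_form_invertible_cancel:
  fixes A :: "'a::comm_ring_1 mat"
  assumes A: "A \<in> carrier_mat m n" and P: "P \<in> carrier_mat m m" "invertible_mat P"
    and Q: "Q \<in> carrier_mat n n" "invertible_mat Q" and "has_smith_form (P * A * Q)"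
  shows "has_smith_form A"
proof -
  obtain P' Q' where P': "P' \<in> carrier_mat m m" "invertible_mat P'"
    and Q': "Q' \<in> carrier_mat n n" "invertible_mat Q'" and "smith_diag (P' * (P * A * Q) * Q')"
    using assms(6) A P Q unfolding has_smith_form_def by auto
  moreover have "P' * (P * A * Q) * Q' = (P' * P) * A * (Q * Q')"
    using P'(1) P(1) A Q(1) Q'(1) by (intro assoc_mult_mat_sandwich[symmetric])
  ultimately show ?thesis
    unfolding has_smith_form_def using A P Q P' Q'
    by (intro exI[of _ "P' * P"] exI[of _ "Q * Q'"]) (auto intro: invertible_mat_mult)
qed

lemma has_smith_form_four_block:
  fixes A :: "'a::comm_ring_1 mat"
  assumes A: "A \<in> carrier_mat m n" "dvd_entries c A" "has_smith_form A"
  shows "has_smith_form (four_block_mat (mat 1 1 (\<lambda>_. c)) (0\<^sub>m 1 n) (0\<^sub>m m 1) A)"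
proof -
  obtain P Q where P: "P \<in> carrier_mat m m" "invertible_mat P"
    and Q: "Q \<in> carrier_mat n n" "invertible_mat Q" and smith: "smith_diag (P * A * Q)"
    using A unfolding has_smith_form_def by auto
  define BP where "BP = four_block_mat (1\<^sub>m 1) (0\<^sub>m 1 m) (0\<^sub>m m 1) P"
  define BQ where "BQ = four_block_mat (1\<^sub>m 1) (0\<^sub>m 1 n) (0\<^sub>m n 1) Q"
  have "BP * four_block_mat (mat 1 1 (\<lambda>_. c)) (0\<^sub>m 1 n) (0\<^sub>m m 1) A * BQ
      = four_block_mat (mat 1 1 (\<lambda>_. c)) (0\<^sub>m 1 n) (0\<^sub>m m 1) (P * A * Q)"
    unfolding BP_def BQ_def using A(1) P(1) Q(1) by (intro four_block_diag_sandwich) auto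
  moreover have "smith_diag (four_block_mat (mat 1 1 (\<lambda>_. c)) (0\<^sub>m 1 n) (0\<^sub>m m 1) (P * A * Q))"
    using smith_diag_four_block[OF _ smith dvd_entries_mult[OF A(2,1) P(1) Q(1)]] A(1) P(1) Q(1)
    by simp
  moreover have "BP \<in> carrier_mat (Suc m) (Suc m)" "invertible_mat BP"
    "BQ \<in> carrier_mat (Suc n) (Suc n)" "invertible_mat BQ"
    unfolding BP_def BQ_def using P Q by (auto intro: invertible_four_block_diag invertible_mat_one)
  ultimately show ?thesis
    unfolding has_smith_form_def using A(1) by (intro exI[of _ BP] exI[of _ BQ]) auto
qed

lemma bilinear_gcd_imp_has_smith_form:
  fixes A :: "'a::idom mat"
  assumes bezout: "bezout_domain TYPE('a)"
    and gcd: "\<And>m n (f :: nat \<Rightarrow> nat \<Rightarrow> 'a). bilinear_gcd_exists m n f"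
  shows "A \<in> carrier_mat m n \<Longrightarrow> has_smith_form A"
proof (induction m arbitrary: n A)
  case 0
  then show ?case by (intro has_smith_form_if_empty) simp
next
  case (Suc m)
  show ?case
  proof (cases n)
    case 0
    then show ?thesis using Suc.prems by (intro has_smith_form_if_empty) simp
  next
    case (Suc n')
    obtain x y where "\<forall>i<Suc m. \<forall>j<n. (\<Sum>i<Suc m. \<Sum>j<n. x i * A $$ (i, j) * y j) dvd A $$ (i, j)"
      using gcd[of "Suc m" n "\<lambda>i j. A $$ (i, j)"] unfolding bilinear_gcd_exists_def by blast
    then have "dvd_entries (\<Sum>i<Suc m. \<Sum>j<n. x i * A $$ (i, j) * y j) A"
      using Suc.prems unfolding dvd_entries_def by simp
    then obtain P Q where P: "P \<in> carrier_mat (Suc m) (Suc m)" "invertible_mat P"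
      and Q: "Q \<in> carrier_mat n n" "invertible_mat Q"
      and pivot: "\<forall>i. 0 < i \<and> i < Suc m \<longrightarrow> (P * A * Q) $$ (i, 0) = 0"
        "dvd_entries ((P * A * Q) $$ (0, 0)) (P * A * Q)"
      using bilinear_gcd_pivot[OF bezout Suc.prems] Suc by blast
    define D where "D = P * A * Q"
    define A' where "A' = mat m n' (\<lambda>(i, j). D $$ (Suc i, Suc j))"
    have D: "D \<in> carrier_mat (Suc m) (Suc n')"
      unfolding D_def using P Q Suc.prems Suc by simp
    obtain Q' where Q': "Q' \<in> carrier_mat n n" "invertible_mat Q'"
      and block: "D * Q' = four_block_mat (mat 1 1 (\<lambda>_. D $$ (0, 0))) (0\<^sub>m 1 n') (0\<^sub>m m 1) A'"
      using pivot_block_form[OF D pivot[folded D_def]] Suc unfolding A'_def by metis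
    have A': "A' \<in> carrier_mat m n'" "dvd_entries (D $$ (0, 0)) A'"
      using pivot(2)[folded D_def] D unfolding A'_def dvd_entries_def by auto
    have "has_smith_form (D * Q')"
      unfolding block using A' Suc.IH[OF A'(1)] by (rule has_smith_form_four_block)
    moreover have "D * Q' = P * A * (Q * Q')"
      unfolding D_def using P(1) Suc.prems Q(1) Q'(1) by (intro assoc_mult_mat[of _ "Suc m" n]) auto
    ultimately show ?thesis
      using Suc.prems P Q Q' by (intro has_smith_form_invertible_cancel[of A "Suc m" n P "Q * Q'"])
        (auto intro: invertible_mat_mult)
  qed
qed

lemma elementary_divisor_ring_imp_kaplansky:
  assumes "elementary_divisor_ring TYPE('a::comm_ring_1)"
  shows "kaplansky_condition TYPE('a)"
  unfolding kaplansky_condition_def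
proof (intro allI impI)
  fix a b c :: 'a
  assume abc: "gcd_one3 a b c"
  define A where "A = mat2 a 0 b c"
  have A: "A \<in> carrier_mat 2 2"
    unfolding A_def by simp
  then obtain P Q where P: "P \<in> carrier_mat 2 2" "invertible_mat P"
    and Q: "Q \<in> carrier_mat 2 2" "invertible_mat Q" and smith: "smith_diag (P * A * Q)"
    using assms unfolding elementary_divisor_ring_def by blast
  define d where "d = (P * A * Q) $$ (0, 0)"
  have "dvd_entries d (P * A * Q)"
    unfolding d_def using smith P(1) Q(1) by (intro smith_diag_dvd_entries) auto
  then have "dvd_entries d A"
    by (rule dvd_entries_invertible_cancel[OF A P Q])
  then have "d dvd A $$ (0, 0)" "d dvd A $$ (1, 0)" "d dvd A $$ (1, 1)"
    using A unfolding dvd_entries_def by auto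
  then have "d dvd a" "d dvd b" "d dvd c"
    unfolding A_def by (simp_all add: index_mat2)
  then have unit: "d dvd 1"
    using abc unfolding gcd_one3_def by blast
  have PA: "P * A \<in> carrier_mat 2 2"
    using P A by simp
  have "(P * A) $$ (0, 0) = P $$ (0, 0) * a + P $$ (0, 1) * b"
    "(P * A) $$ (0, 1) = P $$ (0, 1) * c"
    by (subst index_mult_mat_sum[OF P(1) A]; simp add: sum_lessThan_2 A_def index_mat2)+
  moreover have "d = (P * A) $$ (0, 0) * Q $$ (0, 0) + (P * A) $$ (0, 1) * Q $$ (1, 0)"
    unfolding d_def by (subst index_mult_mat_sum[OF PA Q(1)]) (simp_all add: sum_lessThan_2)
  ultimately have d: "d = P $$ (0, 0) * (a * Q $$ (0, 0)) + P $$ (0, 1) * (b * Q $$ (0, 0) + c * Q $$ (1, 0))"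
    by (simp add: algebra_simps)
  have "gcd_one (a * Q $$ (0, 0)) (b * Q $$ (0, 0) + c * Q $$ (1, 0))"
    unfolding gcd_one_def
  proof (intro allI impI)
    fix e assume "e dvd a * Q $$ (0, 0)" "e dvd b * Q $$ (0, 0) + c * Q $$ (1, 0)"
    then have "e dvd d"
      unfolding d by (simp add: dvd_add dvd_mult)
    then show "e dvd 1"
      using unit by (rule dvd_trans)
  qed
  then show "\<exists>p q. gcd_one (a * p) (b * p + c * q)" by blast
qed

theorem theorem2p13:
  assumes "bezout_domain TYPE('a::idom)"
  shows "elementary_divisor_ring TYPE('a) \<longleftrightarrow>
    (\<forall>a1 a2 b1 b2 :: 'a. gcd_one a1 a2 \<longrightarrow> gcd_one b1 b2 \<longrightarrow>
       (\<exists>r \<alpha> \<beta>. b1 + r * b2 = \<alpha> * \<beta> \<and>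
                 gcd_one \<alpha> \<beta> \<and> gcd_one a1 \<alpha> \<and> gcd_one a2 \<beta>))"
proof -
  have "elementary_divisor_ring TYPE('a) \<longleftrightarrow> kaplansky_condition TYPE('a)"
  proof
    assume "kaplansky_condition TYPE('a)"
    then have "\<And>m n (f :: nat \<Rightarrow> nat \<Rightarrow> 'a). bilinear_gcd_exists m n f"
      using kaplansky_bilinear_gcd[OF assms] by blast
    then show "elementary_divisor_ring TYPE('a)"
      unfolding elementary_divisor_ring_iff_has_smith_form
      using bilinear_gcd_imp_has_smith_form[OF assms] carrier_mat_triv by blast
  qed (rule elementary_divisor_ring_imp_kaplansky)
  also have "\<dots> \<longleftrightarrow> factorization_condition TYPE('a)"
    using kaplansky_imp_factorization_condition[OF assms] factorization_condition_imp_kaplansky[OF assms]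
    by blast
  finally show ?thesis
    unfolding factorization_condition_def .
qed

end
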